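(* Let $X=\{X_t\}_{t=0}^T$ be a state process with $X_0\in\mathring{\mathcal{X}}_R$ and $X_{t+1}=S(X_t,a_t,\varepsilon_{t+1})$, $t=0,\dots,T-1$, where ${\sf a}=\{a_t\}_{t=0}^{T-1}$ is any $\{\mathcal{F}_t\}$-adapted process. Define $\tau^R=\inf\{t\in\{0,\dots,T\}: X_t\notin\mathring{\mathcal{X}}_R\}$ (with $\inf\emptyset=\infty$), and $X_0^R=X_0$, $X_t^R=X_t\mathbb{I}_{\{\tau^R>t\}}+\mathcal{Q}(X_{\tau^R\wedge t})\mathbb{I}_{\{\tau^R\le t\}}$ for $t=1,\dots,T$. Then: (i) $\{\tau^R\le t\}=\{X_t^R\in\partial\mathcal{X}_R\}$ for $t=1,2,\dots,T$; (ii) $\{\tau^R=t+1\}=\{X_t^R\in\mathring{\mathcal{X}}_R,\ S(X_t^R,a_t,\varepsilon_{t+1})\notin\mathring{\mathcal{X}}_R\}$ for $t=0,1,\dots,T-1$.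
   Context: $(\Omega,\mathcal{F},\mathbb{P})$ is a probability space with filtration $\{\mathcal{F}_t\}_{t=0}^T$; $\varepsilon_1,\dots,\varepsilon_T$ are independent $\mathbb{R}^q$-valued random variables; $S:\mathbb{R}^d\times\mathbb{R}^p\times\mathbb{R}^q\to\mathbb{R}^d$ is measurable and $X$ takes values in $\mathcal{X}\subseteq\mathbb{R}^d$. $\mathcal{X}_R\subseteq\mathcal{X}$ is a bounded set with interior $\mathring{\mathcal{X}}_R$, boundary $\partial\mathcal{X}_R$, and compact strictly convex closure $\mathrm{cl}(\mathcal{X}_R)$; $\mathcal{Q}(x)=\arg\inf_{y\in\mathrm{cl}(\mathcal{X}_R)}\|y-x\|$ is the Euclidean nearest-point projection onto $\mathrm{cl}(\mathcal{X}_R)$, which lies in $\partial\mathcal{X}_R$ for $x\notin\mathring{\mathcal{X}}_R$. *)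

theory Defs
  imports "HOL-Analysis.Analysis" "HOL-Probability.Probability" "HOL-Library.Extended_Nat"
begin

definition strictly_convex :: "'a::real_normed_vector set \<Rightarrow> bool" where
  "strictly_convex S \<longleftrightarrow>
     (\<forall>x\<in>S. \<forall>y\<in>S. x \<noteq> y \<longrightarrow> (\<forall>u::real. 0 < u \<and> u < 1 \<longrightarrow> (1 - u) *\<^sub>R x + u *\<^sub>R y \<in> interior S))"

definition projQ :: "'a::euclidean_space set \<Rightarrow> 'a \<Rightarrow> 'a" where
  "projQ XR x = closest_point (closure XR) x"

text \<open>Exit time tau^R (infimum in enat, Inf {} = \<infinity>).\<close>
definition tauR :: "'a::euclidean_space set \<Rightarrow> nat \<Rightarrow> (nat \<Rightarrow> 'w \<Rightarrow> 'a) \<Rightarrow> 'w \<Rightarrow> enat" where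
  "tauR XR T X \<omega> = Inf {enat t | t. t \<le> T \<and> X t \<omega> \<notin> interior XR}"

definition XRproc :: "'a::euclidean_space set \<Rightarrow> nat \<Rightarrow> (nat \<Rightarrow> 'w \<Rightarrow> 'a) \<Rightarrow> nat \<Rightarrow> 'w \<Rightarrow> 'a" where
  "XRproc XR T X t \<omega> =
     (if t = 0 then X 0 \<omega>
      else if enat t < tauR XR T X \<omega> then X t \<omega>
      else projQ XR (X (the_enat (min (tauR XR T X \<omega>) (enat t))) \<omega>))"

end

theory Submission
  imports Defs
begin

text \<open>
  Before the exit time the stopped process is the state itself and lies in the interior; from the
  exit time on it is frozen at the projection of the exit state, which lies on the boundary because
  a nearest point of a closed set to an outside point cannot be interior. For (ii): if
  the exit already happened by time t, then the stopped process is not interior at t; otherwise it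
  equals the state at t, the dynamics turn S(X_t^R, a_t, eps_(t+1)) into the next state, and the
  exit happens at t + 1 exactly when that state leaves the interior.
\<close>

lemma projQ_in_frontier:
  fixes XR :: "'a::euclidean_space set"
  assumes "interior XR \<noteq> {}" and "x \<notin> interior XR"
  shows "projQ XR x \<in> frontier XR"
proof (cases "x \<in> closure XR")
  case True
  then show ?thesis
    using assms(2) by (simp add: projQ_def closest_point_self frontier_def)
next
  case False
  have int_cl: "interior (closure XR) \<noteq> {}"
    using assms(1) interior_mono closure_subset by blast
  then have cl_ne: "closure XR \<noteq> {}"
    using interior_subset[of "closure XR"] by auto
  have "x \<notin> rel_interior (closure XR)"
    using False rel_interior_subset by blast
  then have "projQ XR x \<notin> interior (closure XR)"
    using closest_point_in_rel_interior[OF closed_closure cl_ne, of x]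
      affine_hull_nonempty_interior[OF int_cl] rel_interior_nonempty_interior[OF int_cl]
    unfolding projQ_def by simp
  then have "projQ XR x \<notin> interior XR"
    using interior_mono closure_subset by blast
  moreover have "projQ XR x \<in> closure XR"
    unfolding projQ_def using closest_point_in_set[OF closed_closure cl_ne] .
  ultimately show ?thesis
    by (simp add: frontier_def)
qed

lemma tauR_le_enat_iff:
  "tauR XR T X \<omega> \<le> enat t \<longleftrightarrow> (\<exists>s\<le>t. s \<le> T \<and> X s \<omega> \<notin> interior XR)"
proof
  assume le: "tauR XR T X \<omega> \<le> enat t"
  show "\<exists>s\<le>t. s \<le> T \<and> X s \<omega> \<notin> interior XR"
  proof (rule ccontr)
    assume "\<not> ?thesis"
    then have "enat (Suc t) \<le> tauR XR T X \<omega>"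
      unfolding tauR_def by (force intro!: Inf_greatest)
    from order_trans[OF this le] show False
      by simp
  qed
next
  assume "\<exists>s\<le>t. s \<le> T \<and> X s \<omega> \<notin> interior XR"
  then obtain s where "s \<le> t" "s \<le> T" "X s \<omega> \<notin> interior XR"
    by blast
  then have "tauR XR T X \<omega> \<le> enat s"
    unfolding tauR_def by (force intro!: Inf_lower)
  with \<open>s \<le> t\<close> show "tauR XR T X \<omega> \<le> enat t"
    by (meson enat_ord_simps(1) order_trans)
qed

lemma tauR_eq_enat_iff:
  "tauR XR T X \<omega> = enat k \<longleftrightarrow>
     k \<le> T \<and> X k \<omega> \<notin> interior XR \<and> (\<forall>s<k. X s \<omega> \<in> interior XR)"
proof
  assume tau: "tauR XR T X \<omega> = enat k"
  then obtain s where s: "s \<le> k" "s \<le> T" "X s \<omega> \<notin> interior XR"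
    using tauR_le_enat_iff[of XR T X \<omega> k] by auto
  then have "tauR XR T X \<omega> \<le> enat s"
    using tauR_le_enat_iff[of XR T X \<omega> s] by blast
  with tau s(1) have "s = k"
    by simp
  with s have k: "k \<le> T" "X k \<omega> \<notin> interior XR"
    by simp_all
  have "X s' \<omega> \<in> interior XR" if "s' < k" for s'
  proof (rule ccontr)
    assume "X s' \<omega> \<notin> interior XR"
    with that k(1) have "tauR XR T X \<omega> \<le> enat s'"
      using tauR_le_enat_iff[of XR T X \<omega> s'] by auto
    with tau that show False
      by simp
  qed
  with k show "k \<le> T \<and> X k \<omega> \<notin> interior XR \<and> (\<forall>s<k. X s \<omega> \<in> interior XR)"
    by blast
next
  assume k: "k \<le> T \<and> X k \<omega> \<notin> interior XR \<and> (\<forall>s<k. X s \<omega> \<in> interior XR)"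
  then have "tauR XR T X \<omega> \<le> enat k"
    using tauR_le_enat_iff[of XR T X \<omega> k] by blast
  then obtain j where j: "tauR XR T X \<omega> = enat j" "j \<le> k"
    by (cases "tauR XR T X \<omega>") auto
  have "\<not> j < k"
  proof
    assume "j < k"
    then have "\<not> tauR XR T X \<omega> \<le> enat j"
      using k tauR_le_enat_iff[of XR T X \<omega> j] by auto
    with j(1) show False
      by simp
  qed
  with j show "tauR XR T X \<omega> = enat k"
    by simp
qed

lemma XRproc_before_tauR:
  assumes "t \<le> T" and "\<not> tauR XR T X \<omega> \<le> enat t"
  shows "XRproc XR T X t \<omega> = X t \<omega>" and "X t \<omega> \<in> interior XR"
proof -
  show "X t \<omega> \<in> interior XR"
    using assms tauR_le_enat_iff[of XR T X \<omega> t] by auto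
  then show "XRproc XR T X t \<omega> = X t \<omega>"
    using assms(2) by (simp add: XRproc_def not_le)
qed

lemma XRproc_after_tauR_in_frontier:
  assumes "interior XR \<noteq> {}" and "1 \<le> t" and "tauR XR T X \<omega> \<le> enat t"
  shows "XRproc XR T X t \<omega> \<in> frontier XR"
proof -
  obtain k where k: "tauR XR T X \<omega> = enat k"
    using assms(3) by (cases "tauR XR T X \<omega>") auto
  then have "k \<le> t" and "X k \<omega> \<notin> interior XR"
    using assms(3) tauR_eq_enat_iff[of XR T X \<omega> k] by auto
  moreover have "XRproc XR T X t \<omega> = projQ XR (X k \<omega>)"
    using k \<open>k \<le> t\<close> assms(2) by (simp add: XRproc_def min_def)
  ultimately show ?thesis
    using projQ_in_frontier[OF assms(1)] by simp
qed

lemma tauR_le_iff_XRproc_in_frontier: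
  assumes "interior XR \<noteq> {}" and "1 \<le> t" and "t \<le> T"
  shows "tauR XR T X \<omega> \<le> enat t \<longleftrightarrow> XRproc XR T X t \<omega> \<in> frontier XR"
proof (cases "tauR XR T X \<omega> \<le> enat t")
  case True
  then show ?thesis
    using XRproc_after_tauR_in_frontier[OF assms(1,2) True] by simp
next
  case False
  then show ?thesis
    using XRproc_before_tauR[OF assms(3) False] by (simp add: frontier_def)
qed

lemma tauR_eq_Suc_iff_XRproc:
  assumes X0: "X 0 \<omega> \<in> interior XR" and "t < T"
    and step: "X (Suc t) \<omega> = f (X t \<omega>)"
  shows "tauR XR T X \<omega> = enat (Suc t) \<longleftrightarrow>
           XRproc XR T X t \<omega> \<in> interior XR \<and> f (XRproc XR T X t \<omega>) \<notin> interior XR"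
proof (cases "tauR XR T X \<omega> \<le> enat t")
  case True
  then have "t \<noteq> 0"
    using X0 tauR_le_enat_iff[of XR T X \<omega> 0] by (cases t) auto
  then have "XRproc XR T X t \<omega> \<in> frontier XR"
    using XRproc_after_tauR_in_frontier[OF _ _ True] X0 by auto
  then show ?thesis
    using True by (auto simp: frontier_def)
next
  case False
  then have before: "\<forall>s<Suc t. X s \<omega> \<in> interior XR"
    using \<open>t < T\<close> tauR_le_enat_iff[of XR T X \<omega> t] by (auto simp: less_Suc_eq_le)
  have tau_iff: "tauR XR T X \<omega> = enat (Suc t) \<longleftrightarrow> X (Suc t) \<omega> \<notin> interior XR"
    using tauR_eq_enat_iff[of XR T X \<omega> "Suc t"] before \<open>t < T\<close> by (simp add: Suc_le_eq)
  have XRproc_eq: "XRproc XR T X t \<omega> = X t \<omega>"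
    using XRproc_before_tauR(1)[OF less_imp_le[OF \<open>t < T\<close>] False] .
  have "X t \<omega> \<in> interior XR"
    using before by blast
  then show ?thesis
    unfolding tau_iff XRproc_eq step by blast
qed

theorem lemma1:
  fixes M :: "'w measure" and F :: "nat \<Rightarrow> 'w measure"
    and T :: nat
    and S :: "real^'d \<Rightarrow> real^'p \<Rightarrow> real^'q \<Rightarrow> real^'d"
    and X :: "nat \<Rightarrow> 'w \<Rightarrow> real^'d"
    and a :: "nat \<Rightarrow> 'w \<Rightarrow> real^'p"
    and eps :: "nat \<Rightarrow> 'w \<Rightarrow> real^'q"
    and \<X> XR :: "(real^'d) set"
  assumes prob: "prob_space M"
    and filt: "filtration (space M) F"
    and filt_sub: "\<And>t. sets (F t) \<subseteq> sets M"
    and eps_rv: "\<And>t. t \<in> {1..T} \<Longrightarrow> eps t \<in> borel_measurable M"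
    and eps_indep: "prob_space.indep_vars M (\<lambda>_. borel) eps {1..T}"
    and S_meas: "(\<lambda>(x, u, e). S x u e) \<in> borel_measurable borel"
    and a_adapted: "\<And>t. t < T \<Longrightarrow> a t \<in> borel_measurable (F t)"
    and X_vals: "\<And>t \<omega>. t \<le> T \<Longrightarrow> \<omega> \<in> space M \<Longrightarrow> X t \<omega> \<in> \<X>"
    and XR_sub: "XR \<subseteq> \<X>"
    and XR_bdd: "bounded XR"
    and cl_compact: "compact (closure XR)"
    and cl_sconv: "strictly_convex (closure XR)"
    and X0: "\<And>\<omega>. \<omega> \<in> space M \<Longrightarrow> X 0 \<omega> \<in> interior XR"
    and dyn: "\<And>t \<omega>. t < T \<Longrightarrow> \<omega> \<in> space M \<Longrightarrow> X (Suc t) \<omega> = S (X t \<omega>) (a t \<omega>) (eps (Suc t) \<omega>)"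
  shows "(\<forall>t\<in>{1..T}. {\<omega> \<in> space M. tauR XR T X \<omega> \<le> enat t}
                     = {\<omega> \<in> space M. XRproc XR T X t \<omega> \<in> frontier XR})
       \<and> (\<forall>t<T. {\<omega> \<in> space M. tauR XR T X \<omega> = enat (Suc t)}
                     = {\<omega> \<in> space M. XRproc XR T X t \<omega> \<in> interior XR
                          \<and> S (XRproc XR T X t \<omega>) (a t \<omega>) (eps (Suc t) \<omega>) \<notin> interior XR})"
proof (intro conjI ballI allI impI Collect_cong conj_cong refl)
  fix t \<omega>
  assume t: "t \<in> {1..T}" and \<omega>: "\<omega> \<in> space M"
  have "interior XR \<noteq> {}"
    using X0[OF \<omega>] by blast
  with t show "tauR XR T X \<omega> \<le> enat t \<longleftrightarrow> XRproc XR T X t \<omega> \<in> frontier XR"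
    by (intro tauR_le_iff_XRproc_in_frontier) auto
next
  fix t \<omega>
  assume t: "t < T" and \<omega>: "\<omega> \<in> space M"
  show "tauR XR T X \<omega> = enat (Suc t) \<longleftrightarrow>
      XRproc XR T X t \<omega> \<in> interior XR
      \<and> S (XRproc XR T X t \<omega>) (a t \<omega>) (eps (Suc t) \<omega>) \<notin> interior XR"
    using X0[OF \<omega>] t dyn[OF t \<omega>] by (rule tauR_eq_Suc_iff_XRproc)
qed

end
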